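(* If there is an $n$-vertex weighted graph $G=(V,w)$ with $\mathrm{cdim}(G)=k$, then $D_{\mathrm{lin}}(\mathrm{MINCUT}_n)\ge k$.
   Context: An $n$-vertex weighted graph $G=(V,w)$ is given by $w\in\mathbb{R}_{\ge0}^{\binom n2}$ on unordered pairs of distinct vertices; $E=\{e:w(e)>0\}$, $m=|E|$. For $\emptyset\ne X\subsetneq V$, $\Delta(X)$ is the set of edges of $E$ with exactly one endpoint in $X$; $\mathcal{M}(G)$ is the set of minimum-weight cuts; $\chi(S)\in\{0,1\}^m$ is the characteristic vector indexed by $E$; $\mathrm{cdim}(G)=\dim\,\mathrm{span}\{\chi(S):S\in\mathcal{M}(G)\}$. In $\mathrm{MINCUT}_n$ the input is an $n$-vertex weighted graph and the output is its minimum cut weight. A linear query $x\in\mathbb{R}^{\binom n2}$ is answered with $\langle x,w\rangle$ (adaptively). $D_{\mathrm{lin}}(\mathrm{MINCUT}_n)$ is the minimum over deterministic linear query algorithms correct on all $n$-vertex weighted graphs of the worst-case number of queries. *)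

theory Defs
  imports "HOL-Analysis.Analysis" "HOL-Library.Function_Algebras" "HOL-Library.Extended_Nat"
begin

text \<open>Vertices are 0..n-1. Unordered pairs of distinct vertices are encoded as (i,j) with i<j<n.\<close>

definition pairs :: "nat \<Rightarrow> (nat \<times> nat) set" where
  "pairs n = {(i, j). i < j \<and> j < n}"

definition wgraphs :: "nat \<Rightarrow> (nat \<times> nat \<Rightarrow> real) set" where
  "wgraphs n = {w. (\<forall>e \<in> pairs n. 0 \<le> w e) \<and> (\<forall>e. e \<notin> pairs n \<longrightarrow> w e = 0)}"

definition edges :: "nat \<Rightarrow> (nat \<times> nat \<Rightarrow> real) \<Rightarrow> (nat \<times> nat) set" where
  "edges n w = {e \<in> pairs n. w e > 0}"

definition cut :: "nat \<Rightarrow> (nat \<times> nat \<Rightarrow> real) \<Rightarrow> nat set \<Rightarrow> (nat \<times> nat) set" where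
  "cut n w X = {(i, j) \<in> edges n w. (i \<in> X) \<noteq> (j \<in> X)}"

definition cut_weight :: "nat \<Rightarrow> (nat \<times> nat \<Rightarrow> real) \<Rightarrow> nat set \<Rightarrow> real" where
  "cut_weight n w X = (\<Sum>e \<in> cut n w X. w e)"

definition vsets :: "nat \<Rightarrow> nat set set" where
  "vsets n = {X. X \<noteq> {} \<and> X \<subset> {..<n}}"

definition mincut :: "nat \<Rightarrow> (nat \<times> nat \<Rightarrow> real) \<Rightarrow> real" where
  "mincut n w = Min (cut_weight n w ` vsets n)"

definition min_cuts :: "nat \<Rightarrow> (nat \<times> nat \<Rightarrow> real) \<Rightarrow> (nat \<times> nat) set set" where
  "min_cuts n w = {cut n w X | X. X \<in> vsets n \<and> cut_weight n w X = mincut n w}"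

text \<open>Characteristic vector chi(S), indexed by E (extended by zero, since S is a subset of E).\<close>
definition chi :: "(nat \<times> nat) set \<Rightarrow> (nat \<times> nat \<Rightarrow> real)" where
  "chi S = (\<lambda>e. if e \<in> S then 1 else 0)"

definition cdim :: "nat \<Rightarrow> (nat \<times> nat \<Rightarrow> real) \<Rightarrow> nat" where
  "cdim n w = vector_space.dim (\<lambda>c f. (\<lambda>x. c * f x)) (chi ` min_cuts n w)"

text \<open>Deterministic adaptive linear query algorithms as decision trees:
  a node queries x and continues depending on the real answer <x,w>.\<close>
datatype qtree = Leaf real | Query "nat \<times> nat \<Rightarrow> real" "real \<Rightarrow> qtree"

definition inner_w :: "nat \<Rightarrow> (nat \<times> nat \<Rightarrow> real) \<Rightarrow> (nat \<times> nat \<Rightarrow> real) \<Rightarrow> real" where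
  "inner_w n x w = (\<Sum>e \<in> pairs n. x e * w e)"

primrec run_out :: "nat \<Rightarrow> qtree \<Rightarrow> (nat \<times> nat \<Rightarrow> real) \<Rightarrow> real" where
  "run_out n (Leaf r) w = r"
| "run_out n (Query x f) w = run_out n (f (inner_w n x w)) w"

primrec num_queries :: "nat \<Rightarrow> qtree \<Rightarrow> (nat \<times> nat \<Rightarrow> real) \<Rightarrow> nat" where
  "num_queries n (Leaf r) w = 0"
| "num_queries n (Query x f) w = Suc (num_queries n (f (inner_w n x w)) w)"

definition correct_mincut :: "nat \<Rightarrow> qtree \<Rightarrow> bool" where
  "correct_mincut n A = (\<forall>w \<in> wgraphs n. run_out n A w = mincut n w)"

definition D_lin_mincut :: "nat \<Rightarrow> enat" where
  "D_lin_mincut n = (INF A \<in> {A. correct_mincut n A}. SUP w \<in> wgraphs n. enat (num_queries n A w))"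

end

theory Submission
  imports Defs
begin

text \<open>Suppose an algorithm asks fewer than \<open>cdim n w\<close> queries on input \<open>w\<close>. Then some minimum cut
  \<open>S\<close> has \<open>\<chi>(S)\<close> outside the span of the queries restricted to the edge set \<open>E\<close>, so there is a
  direction \<open>d\<close> supported on \<open>E\<close> that is orthogonal to every query but has \<open>\<langle>\<chi>(S), d\<rangle> < 0\<close>.
  For small \<open>t > 0\<close>, \<open>w + t d\<close> is still a weighted graph, every query gets the same answer, so the
  algorithm gives the same output; yet the cut \<open>S\<close> now weighs less than \<open>mincut n w\<close>.\<close>

interpretation fun_vs: vector_space "\<lambda>(c :: real) (f :: nat \<times> nat \<Rightarrow> real) x. c * f x"
  by unfold_locales (auto simp: fun_eq_iff algebra_simps)

definition restrict_to :: "(nat \<times> nat) set \<Rightarrow> (nat \<times> nat \<Rightarrow> real) \<Rightarrow> (nat \<times> nat \<Rightarrow> real)" where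
  "restrict_to P v = (\<lambda>e. if e \<in> P then v e else 0)"

definition supported_on :: "(nat \<times> nat) set \<Rightarrow> (nat \<times> nat \<Rightarrow> real) \<Rightarrow> bool" where
  "supported_on P d \<longleftrightarrow> (\<forall>e. e \<notin> P \<longrightarrow> d e = 0)"

lemma supported_onD: "supported_on P d \<Longrightarrow> e \<notin> P \<Longrightarrow> d e = 0"
  unfolding supported_on_def by blast

definition inner_on :: "(nat \<times> nat) set \<Rightarrow> (nat \<times> nat \<Rightarrow> real) \<Rightarrow> (nat \<times> nat \<Rightarrow> real) \<Rightarrow> real" where
  "inner_on P y d = (\<Sum>e\<in>P. y e * d e)"

lemma inner_on_diff_left: "inner_on P (\<lambda>e. b e - c * y e) d = inner_on P b d - c * inner_on P y d"
  by (simp add: inner_on_def left_diff_distrib sum_subtractf sum_distrib_left mult.assoc)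

lemma inner_on_diff_right: "inner_on P b (\<lambda>e. d e - c * d' e) = inner_on P b d - c * inner_on P b d'"
  by (simp add: inner_on_def right_diff_distrib sum_subtractf sum_distrib_left algebra_simps)

lemma inner_on_minus_right: "inner_on P y (\<lambda>e. - d e) = - inner_on P y d"
  by (simp add: inner_on_def sum_negf)

text \<open>Finite-dimensional duality. The inductive step projects out \<open>y\<close> along a direction \<open>d'\<close>
  that is orthogonal to \<open>ys\<close> but not to \<open>y\<close>.\<close>
lemma restrict_in_span_if_orthogonal:
  assumes "finite P"
    and "\<And>d. supported_on P d \<Longrightarrow> \<forall>y\<in>set ys. inner_on P y d = 0 \<Longrightarrow> inner_on P b d = 0"
  shows "restrict_to P b \<in> fun_vs.span (restrict_to P ` set ys)"
  using assms(2)
proof (induction ys arbitrary: b)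
  case Nil
  have "supported_on P (restrict_to P b)" by (simp add: supported_on_def restrict_to_def)
  then have "inner_on P b (restrict_to P b) = 0" using Nil by simp
  then have "(\<Sum>e\<in>P. (b e)\<^sup>2) = 0" by (simp add: inner_on_def restrict_to_def power2_eq_square)
  then have "\<forall>e\<in>P. b e = 0" using \<open>finite P\<close> by (simp add: sum_nonneg_eq_0_iff)
  then have "restrict_to P b = 0" by (auto simp: restrict_to_def fun_eq_iff)
  then show ?case using fun_vs.span_zero by metis
next
  case (Cons y ys)
  have span_mono: "fun_vs.span (restrict_to P ` set ys) \<subseteq> fun_vs.span (restrict_to P ` set (y # ys))"
    by (rule fun_vs.span_mono) auto
  show ?case
  proof (cases "\<exists>d'. supported_on P d' \<and> (\<forall>z\<in>set ys. inner_on P z d' = 0) \<and> inner_on P y d' \<noteq> 0")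
    case True
    then obtain d' where d': "supported_on P d'" "\<forall>z\<in>set ys. inner_on P z d' = 0"
      "inner_on P y d' \<noteq> 0" by blast
    define \<beta> where "\<beta> = inner_on P b d' / inner_on P y d'"
    define b' where "b' = (\<lambda>e. b e - \<beta> * y e)"
    have "restrict_to P b' \<in> fun_vs.span (restrict_to P ` set ys)"
    proof (rule Cons.IH)
      fix d assume d: "supported_on P d" "\<forall>z\<in>set ys. inner_on P z d = 0"
      define c where "c = inner_on P y d / inner_on P y d'"
      define d1 where "d1 = (\<lambda>e. d e - c * d' e)"
      have "supported_on P d1" using d(1) d'(1) by (simp add: supported_on_def d1_def)
      moreover have "inner_on P z d1 = 0" if "z \<in> set (y # ys)" for z
      proof -
        have "inner_on P z d1 = inner_on P z d - c * inner_on P z d'"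
          unfolding d1_def by (rule inner_on_diff_right)
        then show ?thesis using that d(2) d'(2,3) by (auto simp: c_def)
      qed
      ultimately have "inner_on P b d1 = 0" using Cons.prems by blast
      then have "inner_on P b d = c * inner_on P b d'" by (simp add: d1_def inner_on_diff_right)
      moreover have "inner_on P b' d = inner_on P b d - \<beta> * inner_on P y d"
        unfolding b'_def by (rule inner_on_diff_left)
      ultimately show "inner_on P b' d = 0"
        using d'(3) by (simp add: c_def \<beta>_def field_simps)
    qed
    then have "restrict_to P b' \<in> fun_vs.span (restrict_to P ` set (y # ys))"
      using span_mono by blast
    moreover have "(\<lambda>e. \<beta> * restrict_to P y e) \<in> fun_vs.span (restrict_to P ` set (y # ys))"
      by (intro fun_vs.span_scale fun_vs.span_base) simp
    moreover have "restrict_to P b = restrict_to P b' + (\<lambda>e. \<beta> * restrict_to P y e)"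
      by (auto simp: restrict_to_def b'_def fun_eq_iff)
    ultimately show ?thesis by (metis fun_vs.span_add)
  next
    case False
    have "restrict_to P b \<in> fun_vs.span (restrict_to P ` set ys)"
      by (rule Cons.IH) (use False Cons.prems in auto)
    then show ?thesis using span_mono by blast
  qed
qed

lemma exists_orthogonal_direction:
  assumes "finite P" and "restrict_to P b \<notin> fun_vs.span (restrict_to P ` set ys)"
  obtains d where "supported_on P d" "\<forall>y\<in>set ys. inner_on P y d = 0" "inner_on P b d < 0"
proof -
  obtain d where d: "supported_on P d" "\<forall>y\<in>set ys. inner_on P y d = 0" "inner_on P b d \<noteq> 0"
    using restrict_in_span_if_orthogonal[OF assms(1)] assms(2) by blast
  show thesis
  proof (cases "inner_on P b d < 0")
    case True
    then show ?thesis using that d by blast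
  next
    case False
    with d show ?thesis
      by (intro that[of "\<lambda>e. - d e"]) (auto simp: supported_on_def inner_on_minus_right)
  qed
qed

primrec queries :: "nat \<Rightarrow> qtree \<Rightarrow> (nat \<times> nat \<Rightarrow> real) \<Rightarrow> (nat \<times> nat \<Rightarrow> real) list" where
  "queries n (Leaf r) w = []"
| "queries n (Query x f) w = x # queries n (f (inner_w n x w)) w"

lemma length_queries: "length (queries n A w) = num_queries n A w"
  by (induction A) auto

lemma run_out_cong_queries:
  "\<forall>x\<in>set (queries n A w). inner_w n x w' = inner_w n x w \<Longrightarrow> run_out n A w' = run_out n A w"
  by (induction A) auto

lemma wgraphs_vanish: "w \<in> wgraphs n \<Longrightarrow> e \<notin> pairs n \<Longrightarrow> w e = 0"
  unfolding wgraphs_def by blast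

lemma wgraphs_nonneg: "w \<in> wgraphs n \<Longrightarrow> 0 \<le> w e"
  using wgraphs_vanish[of w n e] unfolding wgraphs_def by fastforce

lemma finite_pairs: "finite (pairs n)"
  by (rule finite_subset[of _ "{..<n} \<times> {..<n}"]) (auto simp: pairs_def)

lemma finite_edges: "finite (edges n w)"
  using finite_pairs by (rule finite_subset[rotated]) (auto simp: edges_def)

lemma finite_vsets: "finite (vsets n)"
  by (rule finite_subset[of _ "Pow {..<n}"]) (auto simp: vsets_def)

lemma mincut_le_cut_weight: "X \<in> vsets n \<Longrightarrow> mincut n w \<le> cut_weight n w X"
  unfolding mincut_def using finite_vsets by (intro Min_le) auto

definition cross :: "nat \<Rightarrow> nat set \<Rightarrow> (nat \<times> nat) set" where
  "cross n X = {(i, j) \<in> pairs n. (i \<in> X) \<noteq> (j \<in> X)}"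

lemma finite_cross: "finite (cross n X)"
  using finite_pairs by (rule finite_subset[rotated]) (auto simp: cross_def)

lemma cut_eq_cross_inter_edges: "cut n w X = cross n X \<inter> edges n w"
  by (auto simp: cut_def cross_def edges_def)

text \<open>On a weighted graph the cut weight does not depend on which zero-weight pairs are
  counted as edges, so it is linear in the weights.\<close>
lemma cut_weight_eq_sum_cross:
  assumes "w \<in> wgraphs n"
  shows "cut_weight n w X = (\<Sum>e\<in>cross n X. w e)"
  unfolding cut_weight_def cut_eq_cross_inter_edges
  by (rule sum.mono_neutral_left[OF finite_cross])
    (use assms in \<open>auto simp: wgraphs_def cross_def edges_def\<close>)

lemma perturbation_in_wgraphs_eventually:
  assumes "w \<in> wgraphs n" and "supported_on (edges n w) d"
  shows "eventually (\<lambda>t. (\<lambda>e. w e + t * d e) \<in> wgraphs n) (at_right 0)"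
proof -
  have "eventually (\<lambda>t. \<forall>e\<in>edges n w. w e + t * d e > 0) (at_right 0)"
  proof (rule eventually_ball_finite[OF finite_edges], intro ballI)
    fix e assume "e \<in> edges n w"
    then have "w e + 0 * d e > 0" by (simp add: edges_def)
    moreover have "((\<lambda>t. w e + t * d e) \<longlongrightarrow> w e + 0 * d e) (at_right 0)"
      by (intro tendsto_intros)
    ultimately show "eventually (\<lambda>t. w e + t * d e > 0) (at_right (0::real))"
      using order_tendstoD(1) by blast
  qed
  then show ?thesis
  proof eventually_elim
    case (elim t)
    have off_edges: "w e + t * d e = w e" if "e \<notin> edges n w" for e
      using supported_onD[OF assms(2) that] by simp
    have "0 \<le> w e + t * d e" for e
      using elim off_edges[of e] wgraphs_nonneg[OF assms(1), of e]
      by (cases "e \<in> edges n w") (auto simp: less_imp_le)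
    moreover have "w e + t * d e = 0" if "e \<notin> pairs n" for e
      using off_edges[of e] wgraphs_vanish[OF assms(1) that] that by (simp add: edges_def)
    ultimately show ?case by (simp add: wgraphs_def)
  qed
qed

lemma cut_weight_perturbation:
  assumes "w \<in> wgraphs n" "(\<lambda>e. w e + t * d e) \<in> wgraphs n" "supported_on (edges n w) d"
  shows "cut_weight n (\<lambda>e. w e + t * d e) X
    = cut_weight n w X + t * inner_on (edges n w) (chi (cut n w X)) d"
proof -
  let ?E = "edges n w"
  have "(\<Sum>e\<in>cross n X. d e) = (\<Sum>e\<in>cut n w X. d e)"
    using assms(3) by (intro sum.mono_neutral_right[OF finite_cross])
      (auto simp: cut_eq_cross_inter_edges supported_on_def)
  also have "\<dots> = (\<Sum>e\<in>?E \<inter> cut n w X. d e)"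
    by (rule sum.cong) (auto simp: cut_eq_cross_inter_edges)
  also have "\<dots> = inner_on ?E (chi (cut n w X)) d"
    unfolding sum.inter_restrict[OF finite_edges] inner_on_def chi_def by (rule sum.cong) auto
  finally have "(\<Sum>e\<in>cross n X. d e) = inner_on ?E (chi (cut n w X)) d" .
  moreover have "cut_weight n (\<lambda>e. w e + t * d e) X
      = cut_weight n w X + t * (\<Sum>e\<in>cross n X. d e)"
    by (simp add: cut_weight_eq_sum_cross[OF assms(1)] cut_weight_eq_sum_cross[OF assms(2)]
        sum.distrib sum_distrib_left)
  ultimately show ?thesis by simp
qed

lemma inner_w_eq_inner_on:
  assumes "supported_on P d" "P \<subseteq> pairs n"
  shows "inner_w n x d = inner_on P x d"
  unfolding inner_w_def inner_on_def
  by (rule sum.mono_neutral_right[OF finite_pairs assms(2)])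
    (use assms(1) in \<open>auto simp: supported_on_def\<close>)

lemma min_cut_outside_span:
  assumes "length xs < cdim n w"
  obtains S where "S \<in> min_cuts n w"
    "restrict_to (edges n w) (chi S) \<notin> fun_vs.span (restrict_to (edges n w) ` set xs)"
proof (rule ccontr)
  let ?V = "fun_vs.span (restrict_to (edges n w) ` set xs)"
  assume "\<not> thesis"
  with that have "restrict_to (edges n w) (chi S) \<in> ?V" if "S \<in> min_cuts n w" for S
    using that by blast
  moreover have "restrict_to (edges n w) (chi S) = chi S" if "S \<in> min_cuts n w" for S
    using that by (auto simp: restrict_to_def chi_def fun_eq_iff min_cuts_def cut_def)
  ultimately have "chi ` min_cuts n w \<subseteq> ?V" by auto
  then have "cdim n w \<le> card (restrict_to (edges n w) ` set xs)"
    unfolding cdim_def by (rule fun_vs.dim_le_card) simp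
  also have "\<dots> \<le> length xs" by (metis card_image_le card_length finite_set le_trans)
  finally show False using assms by simp
qed

lemma cdim_le_num_queries:
  assumes w: "w \<in> wgraphs n" and A: "correct_mincut n A"
  shows "cdim n w \<le> num_queries n A w"
proof (rule ccontr)
  let ?E = "edges n w"
  assume "\<not> cdim n w \<le> num_queries n A w"
  then have "length (queries n A w) < cdim n w" by (simp add: length_queries)
  then obtain S where S: "S \<in> min_cuts n w"
    "restrict_to ?E (chi S) \<notin> fun_vs.span (restrict_to ?E ` set (queries n A w))"
    by (rule min_cut_outside_span)
  obtain d where d: "supported_on ?E d" "\<forall>x\<in>set (queries n A w). inner_on ?E x d = 0"
    "inner_on ?E (chi S) d < 0"
    using exists_orthogonal_direction[OF finite_edges S(2)] by blast
  obtain t :: real where t: "t > 0" and w': "(\<lambda>e. w e + t * d e) \<in> wgraphs n"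
    using eventually_happens[OF eventually_conj[OF eventually_at_right_less
          perturbation_in_wgraphs_eventually[OF w d(1)]]] by auto
  define w' where "w' = (\<lambda>e. w e + t * d e)"
  have "inner_w n x w' = inner_w n x w + t * inner_w n x d" for x
    unfolding inner_w_def w'_def by (simp add: distrib_left sum.distrib sum_distrib_left ac_simps)
  moreover have "inner_w n x d = inner_on ?E x d" for x
    using d(1) by (rule inner_w_eq_inner_on) (auto simp: edges_def)
  ultimately have "run_out n A w' = run_out n A w"
    using d(2) by (intro run_out_cong_queries) simp
  then have same_mincut: "mincut n w' = mincut n w"
    using A w w' by (simp add: correct_mincut_def w'_def)
  obtain X where X: "S = cut n w X" "X \<in> vsets n" "cut_weight n w X = mincut n w"
    using S(1) by (auto simp: min_cuts_def)
  have "cut_weight n w' X < mincut n w"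
    using cut_weight_perturbation[OF w w' d(1), of X] X t d(3)
    by (simp add: w'_def mult_pos_neg)
  then show False using mincut_le_cut_weight[OF X(2), of w'] same_mincut by simp
qed

theorem corollary6:
  fixes n k :: nat and w :: "nat \<times> nat \<Rightarrow> real"
  assumes "w \<in> wgraphs n"
    and "cdim n w = k"
  shows "D_lin_mincut n \<ge> enat k"
  unfolding D_lin_mincut_def
proof (rule INF_greatest)
  fix A assume "A \<in> {A. correct_mincut n A}"
  then have "enat k \<le> enat (num_queries n A w)"
    using cdim_le_num_queries assms by auto
  also have "\<dots> \<le> (SUP w \<in> wgraphs n. enat (num_queries n A w))"
    using assms(1) by (rule SUP_upper)
  finally show "enat k \<le> (SUP w \<in> wgraphs n. enat (num_queries n A w))" .
qed

end
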